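(* Let $G=Q_8=\langle i,j\mid i^4=j^4=j^{-1}iji=1,\ i^2=j^2\rangle$ and let $m\ge 3$. Let $\Delta$ be the graph with vertex set $G\times\{0,\dots,m-1\}$ (write $g_\ell=(g,\ell)$, $G_\ell=G\times\{\ell\}$) with the following edges: inside $G_0$, $\{g_0,(rg)_0\}$ for $r\in\{i,i^2,i^3\}$; inside $G_\ell$ for $\ell\in\{1,\dots,m-3\}$, $\{g_\ell,(i^2g)_\ell\}$; no edges inside $G_{m-2}$; inside $G_{m-1}$, $\{g_{m-1},(rg)_{m-1}\}$ for $r\in\{j,j^{-1}\}$; for $\ell\in\{0,\dots,m-3\}$ and $g\in G$, $g_\ell$ is adjacent to $g_{\ell+1}$ and to $(ig)_{\ell+1}$; for $g\in G$, $g_{m-2}$ is adjacent to $g_{m-1}$, $(ig)_{m-1}$ and $(jg)_{m-1}$; there are no other edges. Then, identifying $g\in G$ with the permutation $y_\ell\mapsto(yg)_\ell$, $\mathrm{Aut}(\Delta)=G$. Consequently $Q_8$ admits an $m$-GRR for every $m\ge 3$.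
   Context: An $m$-GRR for a group $G$ is a finite regular simple graph having a semiregular group of automorphisms isomorphic to $G$ with exactly $m$ vertex-orbits and whose full automorphism group is isomorphic to $G$. *)

theory Defs
  imports Main
begin

text \<open>The quaternion group Q8, realised concretely as the eight unit integer
quaternions (a,b,c,d) = a + b i + c j + d k with Hamilton multiplication.\<close>

type_synonym quat = "int \<times> int \<times> int \<times> int"

fun qmul :: "quat \<Rightarrow> quat \<Rightarrow> quat" (infixl "\<cdot>" 70) where
  "qmul (a1,b1,c1,d1) (a2,b2,c2,d2) =
     (a1*a2 - b1*b2 - c1*c2 - d1*d2,
      a1*b2 + b1*a2 + c1*d2 - d1*c2,
      a1*c2 - b1*d2 + c1*a2 + d1*b2,
      a1*d2 + b1*c2 - c1*b2 + d1*a2)"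

definition q1 :: quat where "q1 = (1,0,0,0)"
definition qi :: quat where "qi = (0,1,0,0)"
definition qj :: quat where "qj = (0,0,1,0)"

fun qinv :: "quat \<Rightarrow> quat" where
  "qinv (a,b,c,d) = (a,-b,-c,-d)"

definition Q8 :: "quat set" where
  "Q8 = {(1,0,0,0),(-1,0,0,0),(0,1,0,0),(0,-1,0,0),(0,0,1,0),(0,0,-1,0),(0,0,0,1),(0,0,0,-1)}"

definition verts :: "nat \<Rightarrow> (quat \<times> nat) set" where
  "verts m = Q8 \<times> {..<m}"

definition dedge :: "nat \<Rightarrow> quat \<times> nat \<Rightarrow> quat \<times> nat \<Rightarrow> bool" where
  "dedge m x y = (case x of (g,a) \<Rightarrow> case y of (h,b) \<Rightarrow>
      g \<in> Q8 \<and> a < m \<and>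
      ((a = 0 \<and> b = 0 \<and> h \<in> {qi \<cdot> g, qi \<cdot> qi \<cdot> g, qi \<cdot> qi \<cdot> qi \<cdot> g})
     \<or> (1 \<le> a \<and> a \<le> m - 3 \<and> b = a \<and> h = qi \<cdot> qi \<cdot> g)
     \<or> (a = m - 1 \<and> b = m - 1 \<and> h \<in> {qj \<cdot> g, qinv qj \<cdot> g})
     \<or> (a \<le> m - 3 \<and> b = a + 1 \<and> h \<in> {g, qi \<cdot> g})
     \<or> (a = m - 2 \<and> b = m - 1 \<and> h \<in> {g, qi \<cdot> g, qj \<cdot> g})))"

definition adj :: "nat \<Rightarrow> quat \<times> nat \<Rightarrow> quat \<times> nat \<Rightarrow> bool" where
  "adj m x y = (dedge m x y \<or> dedge m y x)"

definition is_aut :: "nat \<Rightarrow> (quat \<times> nat \<Rightarrow> quat \<times> nat) \<Rightarrow> bool" where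
  "is_aut m f = (bij_betw f (verts m) (verts m) \<and>
     (\<forall>x\<in>verts m. \<forall>y\<in>verts m. adj m x y \<longleftrightarrow> adj m (f x) (f y)))"

definition rmul :: "quat \<Rightarrow> quat \<times> nat \<Rightarrow> quat \<times> nat" where
  "rmul g v = (fst v \<cdot> g, snd v)"

definition degree :: "nat \<Rightarrow> quat \<times> nat \<Rightarrow> nat" where
  "degree m v = card {w \<in> verts m. adj m v w}"

end

theory Submission
  imports Defs
begin

(* Every edge of Delta joins g_a to (r g)_b with r in a connection set depending only on the
   layers a and b, so the right multiplications y_l |-> (y g)_l are automorphisms; they act
   transitively on each layer, and the neighbourhood of 1_a always has five vertices.

   Conversely, let f be an automorphism. The vertices lying on a K4 are exactly those of G_0
   (the K4s are the cosets <i>g), and edges only join equal or consecutive layers, so f and its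
   inverse never raise the layer, i.e. f preserves every layer. Composing with a right
   multiplication we may assume that f fixes 1_(m-1); let t and s be the permutations of Q8
   induced on G_(m-1) and G_(m-2). The up-neighbours x, ix, jx of x_(m-2) span the single edge
   {x, jx} of G_(m-1), hence t(ix) = i s(x) and {t(x), t(jx)} = {s(x), j s(x)}. As G_(m-3) forces
   s(ix) = i^(+-1) s(x), this yields s = t, t(ix) = i t(x) and t(jx) = j t(x), so t is the
   identity. Finally a vertex x_a with a <= m-3 is determined by its up-neighbours x_(a+1) and
   (ix)_(a+1), so f fixes the lower layers one after another. *)

section \<open>The quaternion group\<close>

lemma Q8_iff:
  "g \<in> Q8 \<longleftrightarrow> g = (1,0,0,0) \<or> g = (-1,0,0,0) \<or> g = (0,1,0,0) \<or> g = (0,-1,0,0)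
     \<or> g = (0,0,1,0) \<or> g = (0,0,-1,0) \<or> g = (0,0,0,1) \<or> g = (0,0,0,-1)"
  unfolding Q8_def by auto

lemma quat_units: "q1 = (1,0,0,0)" "qi = (0,1,0,0)" "qj = (0,0,1,0)"
  unfolding q1_def qi_def qj_def by simp_all

lemma Q8_units [simp]: "q1 \<in> Q8" "qi \<in> Q8" "qj \<in> Q8"
  unfolding Q8_def quat_units by simp_all

lemma qmul_assoc: "(a \<cdot> b) \<cdot> c = a \<cdot> (b \<cdot> c)"
  by (cases a; cases b; cases c) (simp add: algebra_simps)

lemma qmul_q1 [simp]: "q1 \<cdot> g = g" "g \<cdot> q1 = g"
  unfolding q1_def by (cases g; simp)+

lemma Q8_qmul: "g \<in> Q8 \<Longrightarrow> h \<in> Q8 \<Longrightarrow> g \<cdot> h \<in> Q8"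
  unfolding Q8_iff by (elim disjE; simp)

lemma Q8_qinv: "g \<in> Q8 \<Longrightarrow> qinv g \<in> Q8"
  unfolding Q8_iff by (elim disjE; simp)

lemma qmul_qinv: "g \<in> Q8 \<Longrightarrow> g \<cdot> qinv g = q1"
  unfolding Q8_iff q1_def by (elim disjE; simp)

lemma qinv_qmul: "g \<in> Q8 \<Longrightarrow> qinv g \<cdot> g = q1"
  unfolding Q8_iff q1_def by (elim disjE; simp)

lemma qmul_right_cancel: "c \<in> Q8 \<Longrightarrow> x \<cdot> c = y \<cdot> c \<longleftrightarrow> x = y"
  by (metis qmul_assoc qmul_q1(2) qmul_qinv)

lemma eq_qmul_iff_qinv_qmul: "r \<in> Q8 \<Longrightarrow> g \<in> Q8 \<Longrightarrow> h = r \<cdot> g \<longleftrightarrow> g = qinv r \<cdot> h"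
  by (metis qmul_assoc qinv_qmul qmul_qinv qmul_q1(1))

lemma Q8_left_translates_distinct: "x \<in> Q8 \<Longrightarrow> x \<noteq> qi \<cdot> x \<and> x \<noteq> qj \<cdot> x \<and> qi \<cdot> x \<noteq> qj \<cdot> x"
  unfolding Q8_iff quat_units by (elim disjE; simp)

lemma Q8_left_equivariant:
  assumes i: "\<And>x. x \<in> Q8 \<Longrightarrow> \<phi> (qi \<cdot> x) = qi \<cdot> \<phi> x"
    and j: "\<And>x. x \<in> Q8 \<Longrightarrow> \<phi> (qj \<cdot> x) = qj \<cdot> \<phi> x"
    and g: "g \<in> Q8"
  shows "\<phi> g = g \<cdot> \<phi> q1"
proof -
  let ?S = "{h \<in> Q8. \<phi> h = h \<cdot> \<phi> q1}"
  have q1: "q1 \<in> ?S" by simp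
  have "qi \<cdot> h \<in> ?S" "qj \<cdot> h \<in> ?S" if "h \<in> ?S" for h
    using that i j by (simp_all add: Q8_qmul qmul_assoc)
  then have "qi \<cdot> q1 \<in> ?S" "qi \<cdot> (qi \<cdot> q1) \<in> ?S" "qi \<cdot> (qi \<cdot> (qi \<cdot> q1)) \<in> ?S"
    "qj \<cdot> q1 \<in> ?S" "qi \<cdot> (qj \<cdot> q1) \<in> ?S" "qi \<cdot> (qi \<cdot> (qj \<cdot> q1)) \<in> ?S"
    "qi \<cdot> (qi \<cdot> (qi \<cdot> (qj \<cdot> q1))) \<in> ?S"
    using q1 by blast+
  then show ?thesis using g q1 unfolding Q8_iff quat_units by auto
qed

section \<open>Adjacency through connection sets\<close>

definition conn_same :: "nat \<Rightarrow> nat \<Rightarrow> quat set" where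
  "conn_same m a = (if a = 0 then {qi, qi \<cdot> qi, qi \<cdot> qi \<cdot> qi} else if a \<le> m - 3 then {qi \<cdot> qi}
     else if a = m - 1 then {qj, qinv qj} else {})"

definition conn_up :: "nat \<Rightarrow> nat \<Rightarrow> quat set" where
  "conn_up m a = (if a \<le> m - 3 then {q1, qi} else if a = m - 2 then {q1, qi, qj} else {})"

lemma conn_same_Q8: "r \<in> conn_same m a \<Longrightarrow> r \<in> Q8"
  unfolding conn_same_def by (auto split: if_splits simp: Q8_qmul Q8_qinv)

lemma conn_up_Q8: "r \<in> conn_up m a \<Longrightarrow> r \<in> Q8"
  unfolding conn_up_def by (auto split: if_splits)

lemma conn_same_qinv: "r \<in> conn_same m a \<Longrightarrow> qinv r \<in> conn_same m a"
  unfolding conn_same_def quat_units by (auto split: if_splits)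

lemma conn_up_lt: "r \<in> conn_up m a \<Longrightarrow> m \<ge> 3 \<Longrightarrow> Suc a < m"
  unfolding conn_up_def by (auto split: if_splits)

lemma dedge_same_layer:
  "m \<ge> 3 \<Longrightarrow> dedge m (g,a) (h,a) \<longleftrightarrow> g \<in> Q8 \<and> a < m \<and> (\<exists>r\<in>conn_same m a. h = r \<cdot> g)"
  unfolding dedge_def conn_same_def by auto

lemma dedge_next_layer:
  "m \<ge> 3 \<Longrightarrow> dedge m (g,a) (h,Suc a) \<longleftrightarrow> g \<in> Q8 \<and> a < m \<and> (\<exists>r\<in>conn_up m a. h = r \<cdot> g)"
  unfolding dedge_def conn_up_def by auto

lemma dedge_layer: "dedge m (g,a) (h,b) \<Longrightarrow> b = a \<or> b = Suc a"
  unfolding dedge_def by auto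

lemma in_verts [simp]: "(g,a) \<in> verts m \<longleftrightarrow> g \<in> Q8 \<and> a < m"
  unfolding verts_def by auto

lemma adj_iff:
  assumes m: "m \<ge> 3" and g: "g \<in> Q8" "a < m" and h: "h \<in> Q8" "b < m"
  shows "adj m (g,a) (h,b) \<longleftrightarrow> (b = a \<and> (\<exists>r\<in>conn_same m a. h = r \<cdot> g))
     \<or> (b = Suc a \<and> (\<exists>r\<in>conn_up m a. h = r \<cdot> g)) \<or> (a = Suc b \<and> (\<exists>r\<in>conn_up m b. g = r \<cdot> h))"
proof -
  consider "b = a" | "b = Suc a" | "a = Suc b" | "b \<noteq> a" "b \<noteq> Suc a" "a \<noteq> Suc b"
    by blast
  then show ?thesis
  proof cases
    case 1
    have "(\<exists>r\<in>conn_same m a. g = r \<cdot> h) \<longleftrightarrow> (\<exists>r\<in>conn_same m a. h = r \<cdot> g)"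
      by (metis conn_same_Q8 conn_same_qinv eq_qmul_iff_qinv_qmul g(1) h(1))
    then show ?thesis using 1 dedge_same_layer[OF m] g h unfolding adj_def by auto
  next
    case 2
    then show ?thesis using dedge_next_layer[OF m] dedge_layer[of m h b g a] g unfolding adj_def by auto
  next
    case 3
    then show ?thesis using dedge_next_layer[OF m] dedge_layer[of m g a h b] h unfolding adj_def by auto
  next
    case 4
    then show ?thesis using dedge_layer[of m g a h b] dedge_layer[of m h b g a] unfolding adj_def by auto
  qed
qed

lemma adj_layer_le: "adj m v w \<Longrightarrow> snd w \<le> Suc (snd v)"
  unfolding adj_def dedge_def by (auto split: prod.splits)

lemma adj_next_layer:
  assumes m: "m \<ge> 3" and g: "g \<in> Q8" and a: "Suc a < m"
  shows "adj m (g,a) (g,Suc a)"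
proof -
  have "q1 \<in> conn_up m a" using a unfolding conn_up_def by auto
  then show ?thesis using adj_iff[OF m g _ g a] a by force
qed

lemma adj_top_iff:
  assumes m: "m \<ge> 3" and p: "p \<in> Q8" and q: "q \<in> Q8"
  shows "adj m (p, m-1) (q, m-1) \<longleftrightarrow> q = qj \<cdot> p \<or> q = qinv qj \<cdot> p"
proof -
  have "conn_same m (m-1) = {qj, qinv qj}" using m unfolding conn_same_def by auto
  then show ?thesis using adj_iff[OF m p _ q, of "m-1" "m-1"] m by auto
qed

lemma adj_below_top_iff:
  assumes m: "m \<ge> 3" and p: "p \<in> Q8" and q: "q \<in> Q8"
  shows "adj m (p, m-2) (q, m-1) \<longleftrightarrow> q = p \<or> q = qi \<cdot> p \<or> q = qj \<cdot> p"
proof -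
  have "conn_up m (m-2) = {q1, qi, qj}" "m - 1 = Suc (m - 2)" using m unfolding conn_up_def by auto
  then show ?thesis using adj_iff[OF m p _ q, of "m-2" "m-1"] m by auto
qed

lemma adj_up_iff:
  assumes m: "m \<ge> 3" and p: "p \<in> Q8" and q: "q \<in> Q8" and a: "a \<le> m - 3"
  shows "adj m (p, a) (q, Suc a) \<longleftrightarrow> q = p \<or> q = qi \<cdot> p"
proof -
  have "conn_up m a = {q1, qi}" using a unfolding conn_up_def by auto
  then show ?thesis using adj_iff[OF m p _ q, of a "Suc a"] m a by auto
qed

section \<open>Automorphisms and right multiplications\<close>

lemma aut_verts: "is_aut m f \<Longrightarrow> v \<in> verts m \<Longrightarrow> f v \<in> verts m"
  unfolding is_aut_def using bij_betwE by blast

lemma aut_inj: "is_aut m f \<Longrightarrow> inj_on f (verts m)"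
  unfolding is_aut_def using bij_betw_imp_inj_on by blast

lemma aut_adj:
  "is_aut m f \<Longrightarrow> x \<in> verts m \<Longrightarrow> y \<in> verts m \<Longrightarrow> adj m (f x) (f y) \<longleftrightarrow> adj m x y"
  unfolding is_aut_def by blast

lemma is_aut_comp: assumes f: "is_aut m f" and h: "is_aut m h" shows "is_aut m (h \<circ> f)"
  unfolding is_aut_def
proof
  show "bij_betw (h \<circ> f) (verts m) (verts m)"
    using f h unfolding is_aut_def using bij_betw_trans by blast
  show "\<forall>x\<in>verts m. \<forall>y\<in>verts m. adj m x y = adj m ((h \<circ> f) x) ((h \<circ> f) y)"
    using aut_adj[OF f] aut_adj[OF h] aut_verts[OF f] by simp
qed

lemma is_aut_inv_into:
  assumes f: "is_aut m f" shows "is_aut m (inv_into (verts m) f)"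
  unfolding is_aut_def
proof
  have bij: "bij_betw f (verts m) (verts m)" using f unfolding is_aut_def by blast
  then show bij': "bij_betw (inv_into (verts m) f) (verts m) (verts m)"
    by (rule bij_betw_inv_into)
  show "\<forall>x\<in>verts m. \<forall>y\<in>verts m. adj m x y = adj m (inv_into (verts m) f x) (inv_into (verts m) f y)"
    using aut_adj[OF f] bij_betwE[OF bij'] bij_betw_inv_into_right[OF bij] by metis
qed

lemma rmul_verts: "c \<in> Q8 \<Longrightarrow> v \<in> verts m \<Longrightarrow> rmul c v \<in> verts m"
  unfolding rmul_def verts_def by (auto simp: Q8_qmul)

lemma rmul_rmul: "rmul c (rmul d v) = rmul (d \<cdot> c) v"
  unfolding rmul_def by (simp add: qmul_assoc)

lemma rmul_q1 [simp]: "rmul q1 v = v"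
  unfolding rmul_def by simp

lemma rmul_qinv_rmul: "c \<in> Q8 \<Longrightarrow> rmul (qinv c) (rmul c v) = v"
  by (simp add: rmul_rmul qmul_qinv)

lemma rmul_rmul_qinv: "c \<in> Q8 \<Longrightarrow> rmul c (rmul (qinv c) v) = v"
  by (simp add: rmul_rmul qinv_qmul)

lemma rmul_adj:
  assumes m: "m \<ge> 3" and c: "c \<in> Q8" and x: "x \<in> verts m" and y: "y \<in> verts m"
  shows "adj m (rmul c x) (rmul c y) \<longleftrightarrow> adj m x y"
proof -
  obtain g a h b where xy: "x = (g,a)" "y = (h,b)" by fastforce
  have g: "g \<in> Q8" "a < m" and h: "h \<in> Q8" "b < m" using x y xy by auto
  have "h \<cdot> c = r \<cdot> (g \<cdot> c) \<longleftrightarrow> h = r \<cdot> g" for g h r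
    by (simp add: qmul_assoc[symmetric] qmul_right_cancel c)
  then show ?thesis
    unfolding xy rmul_def
    using adj_iff[OF m g h] adj_iff[OF m Q8_qmul[OF g(1) c] g(2) Q8_qmul[OF h(1) c] h(2)]
    by simp
qed

lemma is_aut_rmul: assumes m: "m \<ge> 3" and c: "c \<in> Q8" shows "is_aut m (rmul c)"
  unfolding is_aut_def
proof
  show "bij_betw (rmul c) (verts m) (verts m)"
    by (rule bij_betw_byWitness[where f'="rmul (qinv c)"])
       (auto simp: rmul_verts c Q8_qinv rmul_qinv_rmul rmul_rmul_qinv)
  show "\<forall>x\<in>verts m. \<forall>y\<in>verts m. adj m x y = adj m (rmul c x) (rmul c y)"
    using rmul_adj[OF m c] by simp
qed

definition nbhd :: "nat \<Rightarrow> quat \<times> nat \<Rightarrow> (quat \<times> nat) set" where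
  "nbhd m v = {w \<in> verts m. adj m v w}"

lemma aut_nbhd:
  assumes f: "is_aut m f" and v: "v \<in> verts m" shows "nbhd m (f v) = f ` nbhd m v"
proof
  show "f ` nbhd m v \<subseteq> nbhd m (f v)"
    using aut_verts[OF f] aut_adj[OF f v] unfolding nbhd_def by auto
  show "nbhd m (f v) \<subseteq> f ` nbhd m v"
  proof
    fix w assume w: "w \<in> nbhd m (f v)"
    have "f ` verts m = verts m" using f unfolding is_aut_def by (simp add: bij_betw_def)
    then obtain u where u: "u \<in> verts m" "w = f u"
      using w unfolding nbhd_def by (metis (no_types, lifting) imageE mem_Collect_eq)
    then have "adj m v u" using w aut_adj[OF f v u(1)] unfolding nbhd_def by simp
    then show "w \<in> f ` nbhd m v" using u unfolding nbhd_def by simp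
  qed
qed

lemma aut_degree:
  assumes f: "is_aut m f" and v: "v \<in> verts m" shows "degree m (f v) = degree m v"
proof -
  have "inj_on f (nbhd m v)" by (rule inj_on_subset[OF aut_inj[OF f]]) (auto simp: nbhd_def)
  then show ?thesis
    unfolding degree_def nbhd_def[symmetric] aut_nbhd[OF f v] by (rule card_image)
qed

section \<open>Neighbourhoods, degrees and K4s\<close>

lemma nbhd_q1:
  assumes m: "m \<ge> 3" and a: "a < m"
  shows "nbhd m (q1,a) = (\<lambda>r. (r,a)) ` conn_same m a \<union> (\<lambda>r. (r, Suc a)) ` conn_up m a
     \<union> (\<lambda>r. (qinv r, a - 1)) ` (if a = 0 then {} else conn_up m (a - 1))"
    (is "_ = ?N")
proof (intro set_eqI)
  fix w :: "quat \<times> nat"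
  obtain h b where w: "w = (h,b)" by fastforce
  have down: "q1 = r \<cdot> h \<longleftrightarrow> h = qinv r" if "r \<in> Q8" "h \<in> Q8" for r
    using eq_qmul_iff_qinv_qmul[OF that, of q1] by simp
  have "w \<in> nbhd m (q1,a) \<longleftrightarrow> h \<in> Q8 \<and> b < m \<and> ((b = a \<and> h \<in> conn_same m a)
      \<or> (b = Suc a \<and> h \<in> conn_up m a) \<or> (a = Suc b \<and> (\<exists>r\<in>conn_up m b. h = qinv r)))"
    unfolding nbhd_def w using adj_iff[OF m Q8_units(1) a, of h b] down conn_up_Q8
    by auto
  also have "\<dots> \<longleftrightarrow> (b = a \<and> h \<in> conn_same m a)
      \<or> (b = Suc a \<and> h \<in> conn_up m a) \<or> (a = Suc b \<and> (\<exists>r\<in>conn_up m b. h = qinv r))"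
    using conn_up_Q8 conn_same_Q8 conn_up_lt[OF _ m] Q8_qinv a Suc_lessD by metis
  also have "\<dots> \<longleftrightarrow> w \<in> ?N"
    unfolding w by (cases a) auto
  finally show "w \<in> nbhd m (q1,a) \<longleftrightarrow> w \<in> ?N" .
qed

lemma nbhd_q1_bottom:
  assumes "m \<ge> 3"
  shows "nbhd m (q1,0) = {((0,1,0,0),0), ((-1,0,0,0),0), ((0,-1,0,0),0), ((1,0,0,0),1), ((0,1,0,0),1)}"
proof -
  have "conn_same m 0 = {qi, qi \<cdot> qi, qi \<cdot> qi \<cdot> qi}" "conn_up m 0 = {q1, qi}"
    using assms unfolding conn_same_def conn_up_def by auto
  then show ?thesis using assms by (subst nbhd_q1) (simp_all add: quat_units insert_commute)
qed

lemma nbhd_q1_middle: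
  assumes "Suc b \<le> m - 3"
  shows "nbhd m (q1, Suc b) =
    {((-1,0,0,0),Suc b), ((1,0,0,0),Suc (Suc b)), ((0,1,0,0),Suc (Suc b)), ((1,0,0,0),b), ((0,-1,0,0),b)}"
proof -
  have "conn_same m (Suc b) = {qi \<cdot> qi}" "conn_up m (Suc b) = {q1, qi}" "conn_up m b = {q1, qi}"
    using assms unfolding conn_same_def conn_up_def by auto
  then show ?thesis using assms by (subst nbhd_q1) (simp_all add: quat_units insert_commute)
qed

lemma nbhd_q1_below_top:
  assumes "Suc (Suc (Suc b)) = m"
  shows "nbhd m (q1, Suc b) =
    {((1,0,0,0),Suc (Suc b)), ((0,1,0,0),Suc (Suc b)), ((0,0,1,0),Suc (Suc b)), ((1,0,0,0),b), ((0,-1,0,0),b)}"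
proof -
  have "conn_same m (Suc b) = {}" "conn_up m (Suc b) = {q1, qi, qj}" "conn_up m b = {q1, qi}"
    using assms unfolding conn_same_def conn_up_def by auto
  then show ?thesis using assms by (subst nbhd_q1) (simp_all add: quat_units insert_commute)
qed

lemma nbhd_q1_top:
  assumes "m \<ge> 3" "Suc (Suc b) = m"
  shows "nbhd m (q1, Suc b) =
    {((0,0,1,0),Suc b), ((0,0,-1,0),Suc b), ((1,0,0,0),b), ((0,-1,0,0),b), ((0,0,-1,0),b)}"
proof -
  have "conn_same m (Suc b) = {qj, qinv qj}" "conn_up m (Suc b) = {}" "conn_up m b = {q1, qi, qj}"
    using assms unfolding conn_same_def conn_up_def by auto
  then show ?thesis using assms by (subst nbhd_q1) (simp_all add: quat_units insert_commute)
qed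

lemma degree_q1:
  assumes m: "m \<ge> 3" and a: "a < m"
  shows "degree m (q1,a) = 5"
proof -
  have "card (nbhd m (q1,a)) = 5"
  proof (cases a)
    case 0
    then show ?thesis using nbhd_q1_bottom[OF m] by simp
  next
    case (Suc b)
    consider "Suc b \<le> m - 3" | "Suc (Suc (Suc b)) = m" | "Suc (Suc b) = m" using a Suc m by linarith
    then show ?thesis
    proof cases
      case 1
      show ?thesis unfolding Suc nbhd_q1_middle[OF 1] by simp
    next
      case 2
      show ?thesis unfolding Suc nbhd_q1_below_top[OF 2] by simp
    next
      case 3
      show ?thesis unfolding Suc nbhd_q1_top[OF m 3] by simp
    qed
  qed
  then show ?thesis unfolding degree_def nbhd_def .
qed

lemma degree_eq_5:
  assumes m: "m \<ge> 3" and v: "v \<in> verts m"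
  shows "degree m v = 5"
proof -
  obtain g a where va: "v = (g,a)" by fastforce
  have g: "g \<in> Q8" "a < m" using v va by auto
  have "v = rmul g (q1,a)" unfolding va rmul_def by simp
  then show ?thesis using aut_degree[OF is_aut_rmul[OF m g(1)], of "(q1,a)"] degree_q1[OF m g(2)] g by simp
qed

(* Above G_0 the neighbourhood of a vertex induces a matching, hence contains no triangle. *)
lemma nbhd_q1_middle_edges:
  assumes b: "Suc b \<le> m - 3" and xy: "x \<in> nbhd m (q1, Suc b)" "y \<in> nbhd m (q1, Suc b)" "adj m x y"
  shows "{x, y} = {((1,0,0,0),b), ((0,-1,0,0),b)}"
proof -
  have m: "m \<ge> 3" and lv: "Suc (Suc b) < m" using b by auto
  have R: "conn_same m (Suc b) = {(-1,0,0,0)}" "conn_up m b = {(1,0,0,0),(0,1,0,0)}"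
    "conn_up m (Suc b) = {(1,0,0,0),(0,1,0,0)}"
    "conn_same m b = {(0,1,0,0),(-1,0,0,0),(0,-1,0,0)} \<or> conn_same m b = {(-1,0,0,0)}"
    "conn_same m (Suc (Suc b)) = {(-1,0,0,0)} \<or> conn_same m (Suc (Suc b)) = {}"
    using b unfolding conn_same_def conn_up_def quat_units by auto
  show ?thesis
    using xy R lv m unfolding nbhd_q1_middle[OF b]
    by (simp only: insert_iff empty_iff, elim disjE conjE) (simp_all add: adj_iff Q8_def insert_commute)
qed

lemma nbhd_q1_below_top_edges:
  assumes b: "Suc (Suc (Suc b)) = m" and xy: "x \<in> nbhd m (q1, Suc b)" "y \<in> nbhd m (q1, Suc b)" "adj m x y"
  shows "{x, y} = {((1,0,0,0),b), ((0,-1,0,0),b)} \<or> {x, y} = {((1,0,0,0),Suc (Suc b)), ((0,0,1,0),Suc (Suc b))}"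
proof -
  have m: "m \<ge> 3" and lv: "Suc (Suc b) < m" using b by auto
  have R: "conn_same m (Suc b) = {}" "conn_up m b = {(1,0,0,0),(0,1,0,0)}"
    "conn_up m (Suc b) = {(1,0,0,0),(0,1,0,0),(0,0,1,0)}"
    "conn_same m (Suc (Suc b)) = {(0,0,1,0),(0,0,-1,0)}"
    "conn_same m b = {(0,1,0,0),(-1,0,0,0),(0,-1,0,0)} \<or> conn_same m b = {(-1,0,0,0)}"
    using b unfolding conn_same_def conn_up_def quat_units by auto
  show ?thesis
    using xy R lv m unfolding nbhd_q1_below_top[OF b]
    by (simp only: insert_iff empty_iff, elim disjE conjE) (simp_all add: adj_iff Q8_def insert_commute)
qed

lemma nbhd_q1_top_edges:
  assumes m: "m \<ge> 3" and b: "Suc (Suc b) = m"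
    and xy: "x \<in> nbhd m (q1, Suc b)" "y \<in> nbhd m (q1, Suc b)" "adj m x y"
  shows "{x, y} = {((0,0,1,0),Suc b), ((1,0,0,0),b)} \<or> {x, y} = {((0,0,-1,0),Suc b), ((0,0,-1,0),b)}"
proof -
  have lv: "Suc b < m" using b by auto
  have R: "conn_same m b = {}" "conn_same m (Suc b) = {(0,0,1,0),(0,0,-1,0)}"
    "conn_up m b = {(1,0,0,0),(0,1,0,0),(0,0,1,0)}"
    using b m unfolding conn_same_def conn_up_def quat_units by auto
  show ?thesis
    using xy R lv m unfolding nbhd_q1_top[OF m b]
    by (simp only: insert_iff empty_iff, elim disjE conjE) (simp_all add: adj_iff Q8_def insert_commute)
qed

lemma no_triangle_on_disjoint_edges:
  assumes "{x, y} \<in> M" "{y, z} \<in> M" "{x, z} \<in> M"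
    and "pairwise disjnt M" "\<forall>P\<in>M. card P = 2"
  shows False
proof -
  have "\<not> disjnt {x, y} {y, z}" by (simp add: disjnt_def)
  then have "{x, y} = {y, z}" using assms(1,2,4) by (meson pairwise_def)
  then have "x = z" by (auto simp: doubleton_eq_iff)
  then show False using assms(3,5) by auto
qed

definition in_K4 :: "nat \<Rightarrow> quat \<times> nat \<Rightarrow> bool" where
  "in_K4 m v \<longleftrightarrow> (\<exists>x\<in>nbhd m v. \<exists>y\<in>nbhd m v. \<exists>z\<in>nbhd m v. adj m x y \<and> adj m y z \<and> adj m x z)"

lemma aut_in_K4:
  assumes f: "is_aut m f" and v: "v \<in> verts m" and K: "in_K4 m v"
  shows "in_K4 m (f v)"
proof -
  obtain x y z where xyz: "x \<in> nbhd m v" "y \<in> nbhd m v" "z \<in> nbhd m v"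
    and adj: "adj m x y" "adj m y z" "adj m x z"
    using K unfolding in_K4_def by blast
  have "x \<in> verts m" "y \<in> verts m" "z \<in> verts m" using xyz unfolding nbhd_def by auto
  then have "adj m (f x) (f y)" "adj m (f y) (f z)" "adj m (f x) (f z)"
    using adj aut_adj[OF f] by auto
  moreover have "f x \<in> nbhd m (f v)" "f y \<in> nbhd m (f v)" "f z \<in> nbhd m (f v)"
    using xyz aut_nbhd[OF f v] by auto
  ultimately show ?thesis unfolding in_K4_def by blast
qed

lemma in_K4_q1_bottom: "m \<ge> 3 \<Longrightarrow> in_K4 m (q1,0)"
  unfolding in_K4_def nbhd_q1_bottom
  by (rule bexI[of _ "((0,1,0,0),0)"], rule bexI[of _ "((-1,0,0,0),0)"], rule bexI[of _ "((0,-1,0,0),0)"])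
    (simp_all add: adj_iff Q8_def conn_same_def quat_units)

lemma not_in_K4_q1_above_bottom:
  assumes m: "m \<ge> 3" and a: "0 < a" "a < m"
  shows "\<not> in_K4 m (q1,a)"
proof
  assume "in_K4 m (q1,a)"
  then obtain x y z where xyz: "x \<in> nbhd m (q1,a)" "y \<in> nbhd m (q1,a)" "z \<in> nbhd m (q1,a)"
    and adj: "adj m x y" "adj m y z" "adj m x z"
    unfolding in_K4_def by blast
  obtain b where b: "a = Suc b" using a by (cases a) auto
  consider "Suc b \<le> m - 3" | "Suc (Suc (Suc b)) = m" | "Suc (Suc b) = m" using a b m by linarith
  then show False
  proof cases
    case 1
    let ?M = "{{((1,0,0,0),b), ((0,-1,0,0),b)}}"
    have "{u, w} \<in> ?M" if "u \<in> nbhd m (q1,a)" "w \<in> nbhd m (q1,a)" "adj m u w" for u w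
      using nbhd_q1_middle_edges[OF 1] that b by simp
    then show False
      using xyz adj by (intro no_triangle_on_disjoint_edges[of x y ?M z]) auto
  next
    case 2
    let ?M = "{{((1,0,0,0),b), ((0,-1,0,0),b)}, {((1,0,0,0),Suc (Suc b)), ((0,0,1,0),Suc (Suc b))}}"
    have "{u, w} \<in> ?M" if "u \<in> nbhd m (q1,a)" "w \<in> nbhd m (q1,a)" "adj m u w" for u w
      using nbhd_q1_below_top_edges[OF 2] that b by simp
    then show False
      using xyz adj by (intro no_triangle_on_disjoint_edges[of x y ?M z]) (auto simp: pairwise_insert disjnt_def)
  next
    case 3
    let ?M = "{{((0,0,1,0),Suc b), ((1,0,0,0),b)}, {((0,0,-1,0),Suc b), ((0,0,-1,0),b)}}"
    have "{u, w} \<in> ?M" if "u \<in> nbhd m (q1,a)" "w \<in> nbhd m (q1,a)" "adj m u w" for u w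
      using nbhd_q1_top_edges[OF m 3] that b by simp
    then show False
      using xyz adj by (intro no_triangle_on_disjoint_edges[of x y ?M z]) (auto simp: pairwise_insert disjnt_def)
  qed
qed

lemma in_K4_iff_bottom:
  assumes m: "m \<ge> 3" and v: "v \<in> verts m"
  shows "in_K4 m v \<longleftrightarrow> snd v = 0"
proof -
  obtain g a where va: "v = (g,a)" by fastforce
  have g: "g \<in> Q8" "a < m" using v va by auto
  have "rmul g (q1,a) = v" "rmul (qinv g) v = (q1,a)"
    unfolding va rmul_def by (simp_all add: qmul_qinv g)
  then have "in_K4 m v \<longleftrightarrow> in_K4 m (q1,a)"
    using aut_in_K4[OF is_aut_rmul[OF m g(1)], of "(q1,a)"]
      aut_in_K4[OF is_aut_rmul[OF m Q8_qinv[OF g(1)]] v] g by auto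
  then show ?thesis
    using in_K4_q1_bottom[OF m] not_in_K4_q1_above_bottom[OF m _ g(2)] va by (cases a) auto
qed

section \<open>Automorphisms preserve the layers\<close>

lemma aut_layer_le:
  assumes m: "m \<ge> 3" and f: "is_aut m f" and v: "v \<in> verts m"
  shows "snd (f v) \<le> snd v"
proof -
  have "\<forall>v\<in>verts m. snd v \<le> l \<longrightarrow> snd (f v) \<le> l" for l
  proof (induction l)
    case 0
    show ?case
      using in_K4_iff_bottom[OF m] aut_in_K4[OF f] aut_verts[OF f] by auto
  next
    case (Suc l)
    show ?case
    proof (intro ballI impI)
      fix v assume v: "v \<in> verts m" and le: "snd v \<le> Suc l"
      show "snd (f v) \<le> Suc l"
      proof (cases "snd v \<le> l")
        case True
        then show ?thesis using Suc.IH v by auto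
      next
        case False
        then obtain g where vg: "v = (g, Suc l)" using le by (metis le_SucE prod.collapse)
        have g: "g \<in> Q8" "Suc l < m" using v vg by auto
        have u: "(g,l) \<in> verts m" using g by simp
        have "adj m (f (g,l)) (f v)" using aut_adj[OF f u v] adj_next_layer[OF m g] vg by simp
        then show ?thesis using adj_layer_le Suc.IH u by fastforce
      qed
    qed
  qed
  then show ?thesis using v by blast
qed

lemma aut_layer:
  assumes m: "m \<ge> 3" and f: "is_aut m f" and v: "v \<in> verts m"
  shows "snd (f v) = snd v"
proof -
  let ?f' = "inv_into (verts m) f"
  have "?f' (f v) = v" using inv_into_f_f[OF aut_inj[OF f] v] .
  then have "snd v \<le> snd (f v)"
    using aut_layer_le[OF m is_aut_inv_into[OF f] aut_verts[OF f v]] by simp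
  then show ?thesis using aut_layer_le[OF m f v] by simp
qed

definition layer_map :: "(quat \<times> nat \<Rightarrow> quat \<times> nat) \<Rightarrow> nat \<Rightarrow> quat \<Rightarrow> quat" where
  "layer_map f a x = fst (f (x, a))"

lemma aut_layer_map:
  assumes m: "m \<ge> 3" and f: "is_aut m f" and x: "x \<in> Q8" and a: "a < m"
  shows "f (x,a) = (layer_map f a x, a)" and "layer_map f a x \<in> Q8"
proof -
  have v: "(x,a) \<in> verts m" using x a by simp
  show "f (x,a) = (layer_map f a x, a)"
    using aut_layer[OF m f v] unfolding layer_map_def by (metis prod.collapse snd_conv)
  then show "layer_map f a x \<in> Q8" using aut_verts[OF f v] by simp
qed

lemma layer_map_adj:
  assumes m: "m \<ge> 3" and f: "is_aut m f" and "x \<in> Q8" "a < m" "y \<in> Q8" "b < m"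
  shows "adj m (layer_map f a x, a) (layer_map f b y, b) \<longleftrightarrow> adj m (x,a) (y,b)"
  using aut_adj[OF f, of "(x,a)" "(y,b)"] aut_layer_map(1)[OF m f] assms by simp

lemma layer_map_inj:
  assumes m: "m \<ge> 3" and f: "is_aut m f" and "x \<in> Q8" "y \<in> Q8" "a < m"
    and "layer_map f a x = layer_map f a y"
  shows "x = y"
  using inj_onD[OF aut_inj[OF f], of "(x,a)" "(y,a)"] aut_layer_map(1)[OF m f] assms by simp

section \<open>Rigidity\<close>

(* The up-neighbours sigma, i sigma, j sigma of a vertex sigma_(m-2) span exactly one edge of
   G_(m-1), namely {sigma, j sigma}. *)
lemma Q8_translate_triple_j_pair:
  assumes \<sigma>: "\<sigma> \<in> Q8"
    and abc: "a \<in> {\<sigma>, qi \<cdot> \<sigma>, qj \<cdot> \<sigma>}" "b \<in> {\<sigma>, qi \<cdot> \<sigma>, qj \<cdot> \<sigma>}"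
      "c \<in> {\<sigma>, qi \<cdot> \<sigma>, qj \<cdot> \<sigma>}"
    and distinct: "a \<noteq> b" "b \<noteq> c" "a \<noteq> c" and ca: "c = qj \<cdot> a \<or> c = qinv qj \<cdot> a"
  shows "b = qi \<cdot> \<sigma> \<and> a \<in> {\<sigma>, qj \<cdot> \<sigma>} \<and> c \<in> {\<sigma>, qj \<cdot> \<sigma>}"
proof -
  have "\<exists>\<alpha>\<in>{q1, qi, qj}. y = \<alpha> \<cdot> \<sigma>" if "y \<in> {\<sigma>, qi \<cdot> \<sigma>, qj \<cdot> \<sigma>}" for y
    using that by auto
  then obtain \<alpha> \<beta> \<gamma> where labels: "\<alpha> \<in> {q1, qi, qj}" "\<beta> \<in> {q1, qi, qj}" "\<gamma> \<in> {q1, qi, qj}"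
    and abc_eq: "a = \<alpha> \<cdot> \<sigma>" "b = \<beta> \<cdot> \<sigma>" "c = \<gamma> \<cdot> \<sigma>"
    using abc by meson
  have "\<gamma> = qj \<cdot> \<alpha> \<or> \<gamma> = qinv qj \<cdot> \<alpha>"
    using ca unfolding abc_eq qmul_assoc[symmetric] qmul_right_cancel[OF \<sigma>] .
  then have "\<beta> = qi \<and> \<alpha> \<in> {q1, qj} \<and> \<gamma> \<in> {q1, qj}"
    using labels distinct unfolding abc_eq quat_units by auto
  then show ?thesis using abc_eq by auto
qed

lemma Q8_translate_pair_i_related:
  assumes "r \<in> Q8" "a \<in> {r, qi \<cdot> r}" "b \<in> {r, qi \<cdot> r}" "a \<noteq> b"
  shows "b = qi \<cdot> a \<or> b = qinv qi \<cdot> a"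
  using assms unfolding Q8_iff quat_units insert_iff empty_iff by (elim disjE; simp)

lemma Q8_i_translate_ne_j_translate: "\<sigma> \<in> Q8 \<Longrightarrow> b \<in> {qi \<cdot> \<sigma>, qinv qi \<cdot> \<sigma>} \<Longrightarrow> qi \<cdot> \<sigma> \<noteq> qj \<cdot> b"
  unfolding Q8_iff quat_units insert_iff empty_iff by (elim disjE; simp)

lemma Q8_i_ne_inv_i: "\<sigma> \<in> Q8 \<Longrightarrow> qi \<cdot> \<sigma> \<noteq> qinv qi \<cdot> \<sigma>"
  unfolding Q8_iff quat_units by (elim disjE; simp)

lemma Q8_translate_pair_fixed: "r \<in> Q8 \<Longrightarrow> x \<in> {r, qi \<cdot> r} \<Longrightarrow> qi \<cdot> x \<in> {r, qi \<cdot> r} \<Longrightarrow> x = r"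
  unfolding Q8_iff quat_units insert_iff empty_iff by (elim disjE; simp)

lemma top_layer_over_second:
  assumes m: "m \<ge> 3" and f: "is_aut m f" and x: "x \<in> Q8"
  shows "layer_map f (m-1) (qi \<cdot> x) = qi \<cdot> layer_map f (m-2) x"
    and "layer_map f (m-1) x \<in> {layer_map f (m-2) x, qj \<cdot> layer_map f (m-2) x}"
    and "layer_map f (m-1) (qj \<cdot> x) \<in> {layer_map f (m-2) x, qj \<cdot> layer_map f (m-2) x}"
proof -
  define t where "t = layer_map f (m-1)"
  define \<sigma> where "\<sigma> = layer_map f (m-2) x"
  have lv: "m - 1 < m" "m - 2 < m" using m by auto
  have \<sigma>: "\<sigma> \<in> Q8" unfolding \<sigma>_def using aut_layer_map(2)[OF m f x lv(2)] .
  have ix: "qi \<cdot> x \<in> Q8" and jx: "qj \<cdot> x \<in> Q8" using x by (simp_all add: Q8_qmul)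
  have up: "t y \<in> {\<sigma>, qi \<cdot> \<sigma>, qj \<cdot> \<sigma>}" if "y \<in> {x, qi \<cdot> x, qj \<cdot> x}" for y
  proof -
    have y: "y \<in> Q8" using that x ix jx by auto
    have "adj m (x, m-2) (y, m-1)" using adj_below_top_iff[OF m x y] that by auto
    then have "adj m (\<sigma>, m-2) (t y, m-1)"
      unfolding t_def \<sigma>_def using layer_map_adj[OF m f x lv(2) y lv(1)] by simp
    then show ?thesis using adj_below_top_iff[OF m \<sigma>] aut_layer_map(2)[OF m f y lv(1)] t_def by auto
  qed
  have distinct: "t x \<noteq> t (qi \<cdot> x)" "t (qi \<cdot> x) \<noteq> t (qj \<cdot> x)" "t x \<noteq> t (qj \<cdot> x)"
    using Q8_left_translates_distinct[OF x] layer_map_inj[OF m f _ _ lv(1)] x ix jx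
    unfolding t_def by metis+
  have "adj m (x, m-1) (qj \<cdot> x, m-1)" using adj_top_iff[OF m x jx] by simp
  then have "adj m (t x, m-1) (t (qj \<cdot> x), m-1)"
    unfolding t_def using layer_map_adj[OF m f x lv(1) jx lv(1)] by simp
  then have "t (qj \<cdot> x) = qj \<cdot> t x \<or> t (qj \<cdot> x) = qinv qj \<cdot> t x"
    using adj_top_iff[OF m] aut_layer_map(2)[OF m f _ lv(1)] x jx unfolding t_def by blast
  then have "t (qi \<cdot> x) = qi \<cdot> \<sigma> \<and> t x \<in> {\<sigma>, qj \<cdot> \<sigma>} \<and> t (qj \<cdot> x) \<in> {\<sigma>, qj \<cdot> \<sigma>}"
    using Q8_translate_triple_j_pair[OF \<sigma> up up up distinct] by simp
  then show "layer_map f (m-1) (qi \<cdot> x) = qi \<cdot> layer_map f (m-2) x"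
    and "layer_map f (m-1) x \<in> {layer_map f (m-2) x, qj \<cdot> layer_map f (m-2) x}"
    and "layer_map f (m-1) (qj \<cdot> x) \<in> {layer_map f (m-2) x, qj \<cdot> layer_map f (m-2) x}"
    unfolding t_def \<sigma>_def by auto
qed

lemma second_layer_i_translate:
  assumes m: "m \<ge> 3" and f: "is_aut m f" and x: "x \<in> Q8"
  shows "layer_map f (m-2) (qi \<cdot> x) \<in> {qi \<cdot> layer_map f (m-2) x, qinv qi \<cdot> layer_map f (m-2) x}"
proof -
  define s where "s = layer_map f (m-2)"
  define r where "r = layer_map f (m-3) x"
  have lv: "m - 2 < m" "m - 3 < m" "Suc (m - 3) = m - 2" using m by auto
  have r: "r \<in> Q8" unfolding r_def using aut_layer_map(2)[OF m f x lv(2)] .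
  have ix: "qi \<cdot> x \<in> Q8" using x by (simp add: Q8_qmul)
  have up: "s y \<in> {r, qi \<cdot> r}" if "y \<in> {x, qi \<cdot> x}" for y
  proof -
    have y: "y \<in> Q8" using that x ix by auto
    have "adj m (x, m-3) (y, m-2)" using adj_up_iff[OF m x y order_refl] lv(3) that by auto
    then have "adj m (r, m-3) (s y, m-2)"
      unfolding s_def r_def using layer_map_adj[OF m f x lv(2) y lv(1)] by simp
    then show ?thesis
      using adj_up_iff[OF m r aut_layer_map(2)[OF m f y lv(1)] order_refl] lv(3) unfolding s_def by auto
  qed
  have "s x \<noteq> s (qi \<cdot> x)"
    using Q8_left_translates_distinct[OF x] layer_map_inj[OF m f x ix lv(1)] unfolding s_def by metis
  then show ?thesis
    using Q8_translate_pair_i_related[OF r up up] unfolding s_def by simp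
qed

lemma top_layers_equivariant:
  assumes m: "m \<ge> 3" and f: "is_aut m f" and x: "x \<in> Q8"
  shows "layer_map f (m-2) x = layer_map f (m-1) x"
    and "layer_map f (m-1) (qi \<cdot> x) = qi \<cdot> layer_map f (m-1) x"
    and "layer_map f (m-1) (qj \<cdot> x) = qj \<cdot> layer_map f (m-1) x"
proof -
  define t where "t = layer_map f (m-1)"
  define s where "s = layer_map f (m-2)"
  have lv: "m - 1 < m" "m - 2 < m" using m by auto
  have i_step: "t (qi \<cdot> y) = s (qi \<cdot> y) \<and> s (qi \<cdot> y) = qi \<cdot> s y" if y: "y \<in> Q8" for y
  proof -
    (* t(iy) = i s(y), while t(iy) is s(iy) or j s(iy) with s(iy) = i^(+-1) s(y); as
       j i^(+-1) differs from i, only t(iy) = s(iy) = i s(y) is possible. *)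
    have iy: "qi \<cdot> y \<in> Q8" using y by (simp add: Q8_qmul)
    have sy: "s y \<in> Q8" unfolding s_def using aut_layer_map(2)[OF m f y lv(2)] .
    have t_iy: "t (qi \<cdot> y) = qi \<cdot> s y"
      unfolding t_def s_def using top_layer_over_second(1)[OF m f y] .
    have s_iy: "s (qi \<cdot> y) \<in> {qi \<cdot> s y, qinv qi \<cdot> s y}"
      unfolding s_def using second_layer_i_translate[OF m f y] .
    have "t (qi \<cdot> y) \<in> {s (qi \<cdot> y), qj \<cdot> s (qi \<cdot> y)}"
      unfolding t_def s_def using top_layer_over_second(2)[OF m f iy] .
    then have "t (qi \<cdot> y) = s (qi \<cdot> y)" using Q8_i_translate_ne_j_translate[OF sy s_iy] t_iy by auto
    then show ?thesis using s_iy t_iy Q8_i_ne_inv_i[OF sy] by auto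
  qed
  have s_eq_t: "s y = t y" if "y \<in> Q8" for y
  proof -
    have "y = qi \<cdot> (qinv qi \<cdot> y)" by (simp add: qmul_assoc[symmetric] qmul_qinv)
    then show ?thesis using i_step[of "qinv qi \<cdot> y"] that by (metis Q8_qinv Q8_qmul Q8_units(2))
  qed
  show "layer_map f (m-2) x = layer_map f (m-1) x" using s_eq_t[OF x] unfolding s_def t_def .
  show "layer_map f (m-1) (qi \<cdot> x) = qi \<cdot> layer_map f (m-1) x"
    using i_step[OF x] s_eq_t[OF x] unfolding s_def t_def by simp
  have jx: "qj \<cdot> x \<in> Q8" using x by (simp add: Q8_qmul)
  have "t (qj \<cdot> x) \<in> {t x, qj \<cdot> t x}"
    using top_layer_over_second(3)[OF m f x] s_eq_t[OF x] unfolding s_def t_def by simp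
  moreover have "t (qj \<cdot> x) \<noteq> t x"
    using Q8_left_translates_distinct[OF x] layer_map_inj[OF m f jx x lv(1)] unfolding t_def by metis
  ultimately show "layer_map f (m-1) (qj \<cdot> x) = qj \<cdot> layer_map f (m-1) x" unfolding t_def by simp
qed

lemma layer_map_fixed_below:
  assumes m: "m \<ge> 3" and f: "is_aut m f" and a: "a \<le> m - 3"
    and fixed: "\<forall>y\<in>Q8. layer_map f (Suc a) y = y" and x: "x \<in> Q8"
  shows "layer_map f a x = x"
proof -
  define r where "r = layer_map f a x"
  have lv: "a < m" "Suc a < m" using a m by auto
  have r: "r \<in> Q8" unfolding r_def using aut_layer_map(2)[OF m f x lv(1)] .
  have up: "y \<in> {r, qi \<cdot> r}" if "y \<in> {x, qi \<cdot> x}" for y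
  proof -
    have y: "y \<in> Q8" using that x by (auto simp: Q8_qmul)
    have "adj m (x, a) (y, Suc a)" using adj_up_iff[OF m x y a] that by auto
    then have "adj m (r, a) (y, Suc a)"
      using layer_map_adj[OF m f x lv(1) y lv(2)] fixed y unfolding r_def by simp
    then show ?thesis using adj_up_iff[OF m r y a] by auto
  qed
  then have "x = r" using Q8_translate_pair_fixed[OF r up[of x] up[of "qi \<cdot> x"]] by simp
  then show ?thesis unfolding r_def by simp
qed

lemma aut_fixing_top_vertex_eq_id:
  assumes m: "m \<ge> 3" and f: "is_aut m f" and top_fixed: "f (q1, m-1) = (q1, m-1)" and v: "v \<in> verts m"
  shows "f v = v"
proof -
  have t1: "layer_map f (m-1) q1 = q1" using top_fixed unfolding layer_map_def by simp
  have top: "layer_map f (m-1) x = x" if "x \<in> Q8" for x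
    using Q8_left_equivariant[of "layer_map f (m-1)", OF top_layers_equivariant(2,3)[OF m f] that] t1
    by simp
  have layer_fixed: "\<forall>x\<in>Q8. layer_map f a x = x" if "a \<le> m - 2" for a
    using that
  proof (induction a rule: inc_induct)
    case base
    show ?case using top top_layers_equivariant(1)[OF m f] by simp
  next
    case (step a)
    then show ?case using layer_map_fixed_below[OF m f] by simp
  qed
  obtain x a where va: "v = (x,a)" by fastforce
  have x: "x \<in> Q8" "a < m" using v va by auto
  have "layer_map f a x = x"
    using layer_fixed[of a] top[OF x(1)] x by (cases "a = m - 1") auto
  then show ?thesis using aut_layer_map(1)[OF m f x] va by simp
qed

lemma aut_eq_rmul:
  assumes m: "m \<ge> 3" and f: "is_aut m f"
  shows "\<exists>g\<in>Q8. \<forall>v\<in>verts m. f v = rmul g v"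
proof -
  define g where "g = layer_map f (m-1) q1"
  have lv: "m - 1 < m" using m by simp
  have fg: "f (q1, m-1) = (g, m-1)" and g: "g \<in> Q8"
    unfolding g_def using aut_layer_map[OF m f Q8_units(1) lv] by simp_all
  let ?f = "rmul (qinv g) \<circ> f"
  have "?f (q1, m-1) = (q1, m-1)" using fg by (simp add: rmul_def qmul_qinv g)
  then have "?f v = v" if "v \<in> verts m" for v
    using aut_fixing_top_vertex_eq_id[OF m is_aut_comp[OF f is_aut_rmul[OF m Q8_qinv[OF g]]]] that by blast
  then have "f v = rmul g v" if "v \<in> verts m" for v
    using rmul_rmul_qinv[OF g, of "f v"] that by simp
  then show ?thesis using g by blast
qed

theorem lemma4p11:
  fixes m :: nat
  assumes "m \<ge> 3"
  shows "(\<forall>f. is_aut m f \<longrightarrow> (\<exists>g\<in>Q8. \<forall>v\<in>verts m. f v = rmul g v))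
       \<and> (\<forall>g\<in>Q8. is_aut m (rmul g))
       \<and> (\<forall>g\<in>Q8. \<forall>h\<in>Q8. (\<forall>v\<in>verts m. rmul g v = rmul h v) \<longrightarrow> g = h)
       \<and> (\<forall>v\<in>verts m. \<forall>w\<in>verts m. degree m v = degree m w)"
proof (intro conjI allI impI ballI)
  show "\<exists>g\<in>Q8. \<forall>v\<in>verts m. f v = rmul g v" if "is_aut m f" for f
    using aut_eq_rmul[OF assms that] .
  show "is_aut m (rmul g)" if "g \<in> Q8" for g
    using is_aut_rmul[OF assms that] .
  show "g = h" if "\<forall>v\<in>verts m. rmul g v = rmul h v" for g h
    using that[rule_format, of "(q1, 0)"] assms by (simp add: rmul_def)
  show "degree m v = degree m w" if "v \<in> verts m" "w \<in> verts m" for v w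
    using degree_eq_5[OF assms] that by simp
qed

end
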